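(* Let $G=(V,E)$ be an unweighted graph having the hypercube shell structure $HSS(D,1)$ for some $D\in\mathbb N$. Suppose every vertex of $G$ satisfies the small sphere property (SSP) and the non-clustering property (NCP). Then $G$ is isomorphic to the $D$-dimensional hypercube $H_D$.
   Context: An unweighted graph is regarded as a weighted graph with edge weights $1$ on edges, $0$ otherwise, and vertex measure $m\equiv1$; thus $\operatorname{Deg}(x)=\deg(x)$ is the number of neighbours. $d$ is the combinatorial distance, $S_k(x)=\{y:d(x,y)=k\}$, $d_-^{x_0}(z)=\#\{y\sim z:d(y,x_0)<d(z,x_0)\}$. $G$ has $HSS(D,1)$ if there is $x_0\in V$ with: (i) every vertex has degree $D$; (ii) $G$ is bipartite; (iii) $d_-^{x_0}(x)=d(x,x_0)$ for all $x\in V$. For a $D$-regular graph and a vertex $x$: (SSP) holds at $x$ if $\#S_2(x)\le\binom D2$; (NCP) holds at $x$ if, whenever $d_-^x(z)=2$ for all $z\in S_2(x)$, for every $y_1,y_2\in S_1(x)$ there is at most one $z\in S_2(x)$ with $y_1\sim z\sim y_2$. $H_D$ has vertex set the power set of $\{1,\dots,D\}$, with $A\sim B$ iff their symmetric difference has exactly one element. *)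

theory Defs
  imports Main "HOL-Library.Extended_Nat"
begin

definition simple_graph :: "'a set \<Rightarrow> ('a \<Rightarrow> 'a \<Rightarrow> bool) \<Rightarrow> bool" where
  "simple_graph V E \<longleftrightarrow> (\<forall>x y. E x y \<longrightarrow> x \<in> V \<and> y \<in> V) \<and>
     (\<forall>x y. E x y \<longrightarrow> E y x) \<and> (\<forall>x. \<not> E x x)"

definition nbrs :: "'a set \<Rightarrow> ('a \<Rightarrow> 'a \<Rightarrow> bool) \<Rightarrow> 'a \<Rightarrow> 'a set" where
  "nbrs V E x = {y \<in> V. E x y}"

definition edge_rel :: "'a set \<Rightarrow> ('a \<Rightarrow> 'a \<Rightarrow> bool) \<Rightarrow> ('a \<times> 'a) set" where
  "edge_rel V E = {(x, y). x \<in> V \<and> y \<in> V \<and> E x y}"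

text \<open>Combinatorial distance (length of a shortest walk), \<infinity> if none exists.\<close>
definition gdist :: "'a set \<Rightarrow> ('a \<Rightarrow> 'a \<Rightarrow> bool) \<Rightarrow> 'a \<Rightarrow> 'a \<Rightarrow> enat" where
  "gdist V E x y = Inf {enat n | n. (x, y) \<in> (edge_rel V E) ^^ n}"

definition sphere :: "'a set \<Rightarrow> ('a \<Rightarrow> 'a \<Rightarrow> bool) \<Rightarrow> nat \<Rightarrow> 'a \<Rightarrow> 'a set" where
  "sphere V E k x = {y \<in> V. gdist V E x y = enat k}"

definition d_minus :: "'a set \<Rightarrow> ('a \<Rightarrow> 'a \<Rightarrow> bool) \<Rightarrow> 'a \<Rightarrow> 'a \<Rightarrow> nat" where
  "d_minus V E x0 z = card {y \<in> V. E y z \<and> gdist V E y x0 < gdist V E z x0}"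

definition regular :: "'a set \<Rightarrow> ('a \<Rightarrow> 'a \<Rightarrow> bool) \<Rightarrow> nat \<Rightarrow> bool" where
  "regular V E D \<longleftrightarrow> (\<forall>x \<in> V. finite (nbrs V E x) \<and> card (nbrs V E x) = D)"

definition bipartite :: "'a set \<Rightarrow> ('a \<Rightarrow> 'a \<Rightarrow> bool) \<Rightarrow> bool" where
  "bipartite V E \<longleftrightarrow> (\<exists>A \<subseteq> V. \<forall>x \<in> V. \<forall>y \<in> V. E x y \<longrightarrow> (x \<in> A \<longleftrightarrow> y \<notin> A))"

definition HSS :: "'a set \<Rightarrow> ('a \<Rightarrow> 'a \<Rightarrow> bool) \<Rightarrow> nat \<Rightarrow> bool" where
  "HSS V E D \<longleftrightarrow> (\<exists>x0 \<in> V. regular V E D \<and> bipartite V E \<and>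
       (\<forall>x \<in> V. enat (d_minus V E x0 x) = gdist V E x x0))"

definition SSP :: "'a set \<Rightarrow> ('a \<Rightarrow> 'a \<Rightarrow> bool) \<Rightarrow> nat \<Rightarrow> 'a \<Rightarrow> bool" where
  "SSP V E D x \<longleftrightarrow> card (sphere V E 2 x) \<le> D choose 2"

definition NCP :: "'a set \<Rightarrow> ('a \<Rightarrow> 'a \<Rightarrow> bool) \<Rightarrow> 'a \<Rightarrow> bool" where
  "NCP V E x \<longleftrightarrow> ((\<forall>z \<in> sphere V E 2 x. d_minus V E x z = 2) \<longrightarrow>
     (\<forall>y1 \<in> sphere V E 1 x. \<forall>y2 \<in> sphere V E 1 x. y1 \<noteq> y2 \<longrightarrow>
        card {z \<in> sphere V E 2 x. E y1 z \<and> E z y2} \<le> 1))"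

definition hcube_V :: "nat \<Rightarrow> nat set set" where
  "hcube_V D = Pow {1..D}"

definition hcube_E :: "nat set \<Rightarrow> nat set \<Rightarrow> bool" where
  "hcube_E A B \<longleftrightarrow> card ((A - B) \<union> (B - A)) = 1"

definition graph_iso :: "'a set \<Rightarrow> ('a \<Rightarrow> 'a \<Rightarrow> bool) \<Rightarrow> 'b set \<Rightarrow> ('b \<Rightarrow> 'b \<Rightarrow> bool) \<Rightarrow> bool" where
  "graph_iso V E W F \<longleftrightarrow> (\<exists>f. bij_betw f V W \<and> (\<forall>x \<in> V. \<forall>y \<in> V. E x y \<longleftrightarrow> F (f x) (f y)))"

end

theory Submission
  imports Defs
begin

text \<open>
  Index the neighbours of the root \<open>x\<^sub>0\<close> by \<open>{1..D}\<close> and label every vertex \<open>x\<close> by the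
  indices of those neighbours that are reachable from \<open>x\<close> along strictly descending paths.
  By induction on \<open>k\<close>, the labelling maps the \<open>k\<close>-th sphere around \<open>x\<^sub>0\<close> bijectively onto
  the \<open>k\<close>-subsets of \<open>{1..D}\<close>, and a vertex is adjacent to a vertex of the next sphere iff
  its label is contained in the other's. For the step, take \<open>v\<close> in sphere \<open>k - 1\<close> and \<open>w\<close> in
  sphere \<open>k + 1\<close>. Two lower neighbours of \<open>w\<close> carry distinct \<open>k\<close>-labels and therefore share
  at most one lower neighbour, so \<open>w\<close> has at least \<open>(k + 1) k / 2\<close> second neighbours in
  sphere \<open>k - 1\<close>; on the other side SSP at \<open>v\<close> allows at most \<open>(D - k + 1)(D - k) / 2\<close>
  second neighbours in sphere \<open>k + 1\<close>. Counting the pairs \<open>(v, w)\<close> at distance two in both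
  ways makes both bounds tight: any two lower neighbours of \<open>w\<close> have exactly one common
  lower neighbour and no vertex is adjacent to three of them, whence the labels of the lower
  neighbours of \<open>w\<close> are exactly the \<open>k\<close>-subsets of the \<open>(k + 1)\<close>-set labelling \<open>w\<close>.
  Finally \<open>v\<close> has at most, hence by SSP exactly, two common neighbours with each vertex at
  distance two, so NCP applies at \<open>v\<close> and keeps two vertices of sphere \<open>k + 1\<close> from sharing
  a label.
\<close>

section \<open>Distance in simple graphs\<close>

lemma gdist_eq_enat_iff:
  "gdist V E x y = enat k \<longleftrightarrow>
     (x, y) \<in> edge_rel V E ^^ k \<and> (\<forall>m<k. (x, y) \<notin> edge_rel V E ^^ m)"
proof -
  let ?S = "{enat n | n. (x, y) \<in> edge_rel V E ^^ n}"
  have "Inf ?S = enat k \<longleftrightarrow> enat k \<in> ?S \<and> (\<forall>b\<in>?S. enat k \<le> b)"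
  proof
    assume k: "Inf ?S = enat k"
    then have "?S \<noteq> {}" unfolding Inf_enat_def by (auto split: if_splits)
    then have "Inf ?S \<in> ?S" unfolding Inf_enat_def by (auto intro: LeastI)
    then show "enat k \<in> ?S \<and> (\<forall>b\<in>?S. enat k \<le> b)"
      unfolding k[symmetric] by (blast intro: Inf_lower)
  next
    assume "enat k \<in> ?S \<and> (\<forall>b\<in>?S. enat k \<le> b)"
    then show "Inf ?S = enat k" by (blast intro: antisym Inf_lower Inf_greatest)
  qed
  moreover have "(\<forall>b\<in>?S. enat k \<le> b) \<longleftrightarrow> (\<forall>m<k. (x, y) \<notin> edge_rel V E ^^ m)"
    by (auto simp flip: not_less)
  ultimately show ?thesis unfolding gdist_def by simp
qed

lemma gdist_le_if_relpow: "(x, y) \<in> edge_rel V E ^^ n \<Longrightarrow> gdist V E x y \<le> enat n"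
  unfolding gdist_def by (rule Inf_lower) auto

lemma gdist_eq_0_iff: "gdist V E x y = enat 0 \<longleftrightarrow> x = y"
  by (simp add: gdist_eq_enat_iff)

context
  fixes V :: "'a set" and E :: "'a \<Rightarrow> 'a \<Rightarrow> bool"
  assumes simple: "simple_graph V E"
begin

lemma edge_rel_iff: "(x, y) \<in> edge_rel V E \<longleftrightarrow> E x y"
  using simple unfolding simple_graph_def edge_rel_def by auto

lemma gdist_eq_1_iff: "gdist V E x y = enat 1 \<longleftrightarrow> E x y"
  using simple edge_rel_iff[of x y] unfolding gdist_eq_enat_iff simple_graph_def by auto

lemma gdist_eq_2_iff: "gdist V E x y = enat 2 \<longleftrightarrow> x \<noteq> y \<and> \<not> E x y \<and> (\<exists>z. E x z \<and> E z y)"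
proof -
  have "(x, y) \<in> edge_rel V E ^^ 2 \<longleftrightarrow> (\<exists>z. E x z \<and> E z y)"
    by (auto simp: numeral_2_eq_2 relcomp_unfold edge_rel_iff)
  moreover have "(\<forall>m<2. (x, y) \<notin> edge_rel V E ^^ m) \<longleftrightarrow> x \<noteq> y \<and> \<not> E x y"
    by (auto simp: less_2_cases_iff edge_rel_iff)
  ultimately show ?thesis unfolding gdist_eq_enat_iff by blast
qed

lemma edge_rel_relpow_sym: "(x, y) \<in> edge_rel V E ^^ n \<Longrightarrow> (y, x) \<in> edge_rel V E ^^ n"
proof (induction n arbitrary: y)
  case (Suc n)
  then obtain z where "(x, z) \<in> edge_rel V E ^^ n" "E z y"
    by (auto simp: edge_rel_iff elim: relpow_Suc_E)
  moreover have "E y z" using \<open>E z y\<close> simple unfolding simple_graph_def by blast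
  ultimately show ?case using Suc.IH relpow_Suc_I2 by (metis edge_rel_iff)
qed simp

lemma gdist_commute: "gdist V E x y = gdist V E y x"
proof -
  have "{enat n |n. (x, y) \<in> edge_rel V E ^^ n} = {enat n |n. (y, x) \<in> edge_rel V E ^^ n}"
    using edge_rel_relpow_sym by blast
  then show ?thesis unfolding gdist_def by simp
qed

lemma gdist_less_2_iff: "gdist V E x y < enat 2 \<longleftrightarrow> x = y \<or> E x y"
proof -
  have "d < enat 2 \<longleftrightarrow> d = enat 0 \<or> d = enat 1" for d
    by (cases d) (auto simp: less_2_cases_iff)
  from this[of "gdist V E x y"] show ?thesis by (simp only: gdist_eq_0_iff gdist_eq_1_iff)
qed

end

lemma sum_card_filter_swap:
  assumes "finite A" "finite B"
  shows "(\<Sum>a\<in>A. card {b\<in>B. P a b}) = (\<Sum>b\<in>B. card {a\<in>A. P a b})"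
proof -
  have "(\<Sum>a\<in>A. card {b\<in>B. P a b}) = (\<Sum>a\<in>A. \<Sum>b\<in>B. of_bool (P a b))"
    using assms(2) by (simp add: Int_def)
  also have "\<dots> = (\<Sum>b\<in>B. \<Sum>a\<in>A. of_bool (P a b))" by (rule sum.swap)
  also have "\<dots> = (\<Sum>b\<in>B. card {a\<in>A. P a b})" using assms(1) by (simp add: Int_def)
  finally show ?thesis .
qed

lemma sum_mono_le_inv:
  fixes f g :: "'i \<Rightarrow> 'a::ordered_cancel_comm_monoid_add"
  assumes "finite A" "\<And>a. a \<in> A \<Longrightarrow> f a \<le> g a" "sum g A \<le> sum f A" "a \<in> A"
  shows "f a = g a"
  using sum_mono_inv[OF antisym[OF sum_mono assms(3)]] assms by blast

lemma binomial_times_diff: "(n choose k) * (n - k) = (n choose Suc k) * Suc k"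
proof (cases n)
  case (Suc m)
  then show ?thesis
    using binomial_absorb_comp[of n k] Suc_times_binomial[of k m] by (simp add: mult.commute)
qed simp

lemma card_distinct_pairs:
  assumes "finite C"
  shows "card {p \<in> C \<times> C. fst p \<noteq> snd p} = card C * (card C - 1)"
proof -
  have "{p \<in> C \<times> C. fst p \<noteq> snd p} = C \<times> C - (\<lambda>x. (x, x)) ` C" by auto
  moreover have "card ((\<lambda>x. (x, x)) ` C) = card C" by (simp add: card_image inj_on_def)
  ultimately show ?thesis
    using assms by (simp add: card_Diff_subset card_cartesian_product diff_mult_distrib2 image_subset_iff)
qed

lemma double_le_pairs_plus_two: "2 * c \<le> c * (c - 1) + 2"
  and double_less_pairs_plus_two: "3 \<le> c \<Longrightarrow> 2 * c < c * (c - 1) + 2"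
  for c :: nat
proof -
  show less: "3 \<le> c \<Longrightarrow> 2 * c < c * (c - 1) + 2"
    using mult_le_mono2[of 2 "c - 1" c] by linarith
  show "2 * c \<le> c * (c - 1) + 2"
  proof (cases "3 \<le> c")
    case False
    then have "c = 0 \<or> c = 1 \<or> c = 2" by auto
    then show ?thesis by auto
  qed (use less in simp)
qed

lemma card_sym_diff_eq_1_iff:
  assumes "finite A" "finite B"
  shows "card (sym_diff A B) = 1 \<longleftrightarrow>
    A \<subseteq> B \<and> card B = Suc (card A) \<or> B \<subseteq> A \<and> card A = Suc (card B)"
proof -
  have "card (sym_diff A B) = card (A - B) + card (B - A)"
    using assms by (subst card_Un_disjoint) auto
  moreover have "card A = card (A \<inter> B) + card (A - B)" "card B = card (A \<inter> B) + card (B - A)"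
    using card_Int_Diff[OF assms(1), of B] card_Int_Diff[OF assms(2), of A] by (simp_all add: Int_commute)
  moreover have "A \<subseteq> B \<longleftrightarrow> card (A - B) = 0" "B \<subseteq> A \<longleftrightarrow> card (B - A) = 0"
    using assms by simp_all
  ultimately show ?thesis by (simp only:) arith
qed

lemma sym_diff_two_steps:
  assumes "card (sym_diff X Z) = 1" "card (sym_diff Z Y) = 1" "X \<noteq> Y"
  shows "Z \<in> (\<lambda>a. sym_diff X {a}) ` sym_diff X Y" "card (sym_diff X Y) = 2"
proof -
  obtain a where a: "sym_diff X Z = {a}" using assms(1) card_1_singletonE by blast
  obtain b where b: "sym_diff Z Y = {b}" using assms(2) card_1_singletonE by blast
  have "sym_diff X Y = sym_diff {a} {b}" using a b by blast
  with assms(3) have XY: "sym_diff X Y = {a, b}" "a \<noteq> b" by auto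
  show "Z \<in> (\<lambda>a. sym_diff X {a}) ` sym_diff X Y" using a XY by blast
  show "card (sym_diff X Y) = 2" using XY by simp
qed

section \<open>Levels of a graph with hypercube shell structure\<close>

locale hss_graph =
  fixes V :: "'a set" and E :: "'a \<Rightarrow> 'a \<Rightarrow> bool" and D :: nat and x0 :: 'a
  assumes simple: "simple_graph V E" and x0_in_V: "x0 \<in> V" and regular: "regular V E D"
    and bipartite: "bipartite V E"
    and d_minus_eq_gdist: "\<forall>x\<in>V. enat (d_minus V E x0 x) = gdist V E x x0"
    and ssp: "\<forall>x\<in>V. SSP V E D x" and ncp: "\<forall>x\<in>V. NCP V E x"
begin

definition level :: "'a \<Rightarrow> nat" where "level x = d_minus V E x0 x"

lemma E_sym: "E x y \<Longrightarrow> E y x"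
  and E_in_V: "E x y \<Longrightarrow> x \<in> V" "E x y \<Longrightarrow> y \<in> V"
  using simple unfolding simple_graph_def by blast+

lemma gdist_level: "x \<in> V \<Longrightarrow> gdist V E x x0 = enat (level x)"
  using d_minus_eq_gdist unfolding level_def by simp

lemma relpow_level: "x \<in> V \<Longrightarrow> (x, x0) \<in> edge_rel V E ^^ level x"
  using gdist_level gdist_eq_enat_iff by metis

lemma level_le_relpow: "x \<in> V \<Longrightarrow> (x, x0) \<in> edge_rel V E ^^ n \<Longrightarrow> level x \<le> n"
  using gdist_le_if_relpow gdist_level by (metis enat_ord_simps(1))

lemma level_x0: "level x0 = 0"
  using level_le_relpow[OF x0_in_V, of 0] by simp

lemma level_eq_0: "x \<in> V \<Longrightarrow> level x = 0 \<Longrightarrow> x = x0"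
  using relpow_level[of x] by simp

lemma level_le_Suc_level: "E x y \<Longrightarrow> level y \<le> Suc (level x)"
  using relpow_Suc_I2[of y x "edge_rel V E" x0 "level x"] relpow_level[of x]
    edge_rel_iff[OF simple] level_le_relpow E_sym E_in_V by metis

lemma relpow_parity:
  assumes A: "\<forall>x\<in>V. \<forall>y\<in>V. E x y \<longrightarrow> (x \<in> A \<longleftrightarrow> y \<notin> A)"
  shows "(x, y) \<in> edge_rel V E ^^ n \<Longrightarrow> (x \<in> A \<longleftrightarrow> y \<in> A) \<longleftrightarrow> even n"
proof (induction n arbitrary: y)
  case (Suc n)
  then obtain z where z: "(x, z) \<in> edge_rel V E ^^ n" "E z y"
    using edge_rel_iff[OF simple] by (auto elim: relpow_Suc_E)
  have "z \<in> A \<longleftrightarrow> y \<notin> A" using A z(2) E_in_V[OF z(2)] by blast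
  then show ?case using Suc.IH[OF z(1)] by auto
qed simp

lemma level_adj_neq: "E x y \<Longrightarrow> level x \<noteq> level y"
proof
  assume e: "E x y" and eq: "level x = level y"
  obtain A where A: "\<forall>x\<in>V. \<forall>y\<in>V. E x y \<longrightarrow> (x \<in> A \<longleftrightarrow> y \<notin> A)"
    using bipartite unfolding bipartite_def by blast
  have "(x \<in> A \<longleftrightarrow> x0 \<in> A) \<longleftrightarrow> even (level x)" "(y \<in> A \<longleftrightarrow> x0 \<in> A) \<longleftrightarrow> even (level y)"
    using relpow_parity[OF A relpow_level] E_in_V[OF e] by blast+
  moreover have "x \<in> A \<longleftrightarrow> y \<notin> A" using A e E_in_V[OF e] by blast
  ultimately show False using eq by auto
qed

lemma level_adj: "E x y \<Longrightarrow> level y = Suc (level x) \<or> level x = Suc (level y)"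
  using level_le_Suc_level[of x y] level_le_Suc_level[of y x] level_adj_neq[of x y] E_sym[of x y]
  by linarith

definition lower :: "'a \<Rightarrow> 'a set" where "lower x = {y\<in>V. E y x \<and> level y < level x}"
definition upper :: "'a \<Rightarrow> 'a set" where "upper x = {y\<in>V. E x y \<and> level x < level y}"

lemma lower_level: "z \<in> lower w \<Longrightarrow> Suc (level z) = level w \<and> z \<in> V \<and> E z w"
  unfolding lower_def using level_adj by fastforce

lemma upper_level: "z \<in> upper w \<Longrightarrow> level z = Suc (level w) \<and> z \<in> V \<and> E w z"
  unfolding upper_def using level_adj by fastforce

lemma finite_nbrs: "x \<in> V \<Longrightarrow> finite (nbrs V E x)"
  and card_nbrs: "x \<in> V \<Longrightarrow> card (nbrs V E x) = D"
  using regular unfolding regular_def by auto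

lemma card_lower: "x \<in> V \<Longrightarrow> card (lower x) = level x"
proof -
  assume x: "x \<in> V"
  have "{y\<in>V. E y x \<and> gdist V E y x0 < gdist V E x x0} = lower x"
    unfolding lower_def using gdist_level x by auto
  then show ?thesis unfolding level_def d_minus_def by metis
qed

lemma nbrs_lower_upper: "nbrs V E x = lower x \<union> upper x" "lower x \<inter> upper x = {}"
  unfolding nbrs_def lower_def upper_def using level_adj_neq E_sym by fastforce+

lemma finite_lower: "x \<in> V \<Longrightarrow> finite (lower x)"
  and finite_upper: "x \<in> V \<Longrightarrow> finite (upper x)"
  using finite_nbrs nbrs_lower_upper by (metis finite_Un)+

lemma card_upper: "x \<in> V \<Longrightarrow> card (upper x) = D - level x"
  and level_le_D: "x \<in> V \<Longrightarrow> level x \<le> D"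
proof -
  assume x: "x \<in> V"
  have "card (nbrs V E x) = card (lower x) + card (upper x)"
    using nbrs_lower_upper finite_lower[OF x] finite_upper[OF x] by (simp add: card_Un_disjoint)
  then show "card (upper x) = D - level x" "level x \<le> D"
    using card_nbrs[OF x] card_lower[OF x] by auto
qed

definition second_nbrs :: "'a \<Rightarrow> 'a set"
  where "second_nbrs v = {u\<in>V. u \<noteq> v \<and> (\<exists>y. E v y \<and> E y u)}"

definition ncommon :: "'a \<Rightarrow> 'a \<Rightarrow> nat" where "ncommon v u = card {y\<in>V. E v y \<and> E y u}"

lemma level_second_nbr:
  "u \<in> second_nbrs v \<Longrightarrow> level u = level v + 2 \<or> level u = level v \<or> level v = level u + 2"
proof -
  assume "u \<in> second_nbrs v"
  then obtain y where "E v y" "E y u" unfolding second_nbrs_def by blast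
  then show ?thesis using level_adj[of v y] level_adj[of y u] by auto
qed

lemma second_nbr_not_adj: "u \<in> second_nbrs v \<Longrightarrow> \<not> E v u"
  using level_second_nbr level_adj by fastforce

lemma sphere_2_eq: "sphere V E 2 v = second_nbrs v"
  unfolding sphere_def second_nbrs_def
  using gdist_eq_2_iff[OF simple] second_nbr_not_adj[unfolded second_nbrs_def] by blast

lemma sphere_1_eq: "sphere V E 1 v = nbrs V E v"
  unfolding sphere_def nbrs_def using gdist_eq_1_iff[OF simple] by auto

lemma d_minus_second_nbr: "u \<in> second_nbrs v \<Longrightarrow> d_minus V E v u = ncommon v u"
proof -
  assume u: "u \<in> second_nbrs v"
  have "gdist V E u v = enat 2"
    using u gdist_commute[OF simple, of u v] sphere_2_eq unfolding sphere_def by auto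
  then have "{y\<in>V. E y u \<and> gdist V E y v < gdist V E u v} = {y\<in>V. E v y \<and> E y u}"
    using gdist_less_2_iff[OF simple] second_nbr_not_adj[OF u] E_sym by auto
  then show ?thesis unfolding d_minus_def ncommon_def by simp
qed

lemma finite_second_nbrs: "v \<in> V \<Longrightarrow> finite (second_nbrs v)"
proof -
  assume v: "v \<in> V"
  have "second_nbrs v \<subseteq> (\<Union>y\<in>nbrs V E v. nbrs V E y)"
    unfolding second_nbrs_def nbrs_def using E_in_V by blast
  moreover have "finite (\<Union>y\<in>nbrs V E v. nbrs V E y)"
    using finite_nbrs[OF v] finite_nbrs unfolding nbrs_def by auto
  ultimately show ?thesis by (rule finite_subset)
qed

lemma sum_ncommon: "v \<in> V \<Longrightarrow> (\<Sum>u\<in>second_nbrs v. ncommon v u) = D * (D - 1)"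
proof -
  assume v: "v \<in> V"
  have "(\<Sum>u\<in>second_nbrs v. ncommon v u) = (\<Sum>u\<in>second_nbrs v. card {y\<in>nbrs V E v. E y u})"
    unfolding ncommon_def nbrs_def by (rule sum.cong) auto
  also have "\<dots> = (\<Sum>y\<in>nbrs V E v. card {u\<in>second_nbrs v. E y u})"
    by (rule sum_card_filter_swap[OF finite_second_nbrs[OF v] finite_nbrs[OF v]])
  also have "\<dots> = (\<Sum>y\<in>nbrs V E v. D - 1)"
  proof (rule sum.cong)
    fix y assume y: "y \<in> nbrs V E v"
    then have "{u\<in>second_nbrs v. E y u} = nbrs V E y - {v}" "v \<in> nbrs V E y" "y \<in> V"
      using v E_sym E_in_V unfolding second_nbrs_def nbrs_def by auto
    then show "card {u\<in>second_nbrs v. E y u} = D - 1" using card_nbrs finite_nbrs by simp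
  qed simp
  also have "\<dots> = D * (D - 1)" using card_nbrs[OF v] by simp
  finally show ?thesis .
qed

lemma card_second_nbrs_le: "v \<in> V \<Longrightarrow> 2 * card (second_nbrs v) \<le> D * (D - 1)"
  using ssp sphere_2_eq unfolding SSP_def choose_two by fastforce

lemma ncommon_eq_2:
  assumes v: "v \<in> V" and le: "\<forall>u\<in>second_nbrs v. ncommon v u \<le> 2" and u: "u \<in> second_nbrs v"
  shows "ncommon v u = 2"
proof (rule sum_mono_le_inv[OF finite_second_nbrs[OF v] _ _ u])
  show "ncommon v u \<le> 2" if "u \<in> second_nbrs v" for u using le that by blast
  show "(\<Sum>u\<in>second_nbrs v. 2) \<le> sum (ncommon v) (second_nbrs v)"
    using card_second_nbrs_le[OF v] sum_ncommon[OF v] by simp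
qed

lemma card_common_second_nbrs_le_1:
  assumes v: "v \<in> V" and le: "\<forall>u\<in>second_nbrs v. ncommon v u \<le> 2"
    and y: "E v y1" "E v y2" "y1 \<noteq> y2"
  shows "card {u\<in>second_nbrs v. E y1 u \<and> E u y2} \<le> 1"
proof -
  have "\<forall>z\<in>sphere V E 2 v. d_minus V E v z = 2"
    using ncommon_eq_2[OF v le] d_minus_second_nbr sphere_2_eq by simp
  moreover have "y1 \<in> sphere V E 1 v" "y2 \<in> sphere V E 1 v"
    using y E_in_V unfolding sphere_1_eq nbrs_def by auto
  ultimately show ?thesis
    using ncp v y(3) unfolding NCP_def sphere_2_eq by blast
qed

definition second_nbrs_up :: "'a \<Rightarrow> 'a set"
  where "second_nbrs_up v = {u\<in>second_nbrs v. level u = level v + 2}"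

definition second_nbrs_down :: "'a \<Rightarrow> 'a set"
  where "second_nbrs_down w = {v\<in>second_nbrs w. level w = level v + 2}"

definition nmiddle :: "'a \<Rightarrow> 'a \<Rightarrow> nat" where "nmiddle w v = card {z\<in>lower w. E v z}"

definition lower_pairs :: "'a \<Rightarrow> ('a \<times> 'a) set"
  where "lower_pairs w = {p \<in> lower w \<times> lower w. fst p \<noteq> snd p}"

lemma second_nbrs_sym: "u \<in> second_nbrs v \<longleftrightarrow> v \<in> second_nbrs u"
  unfolding second_nbrs_def using E_sym E_in_V by blast

lemma second_nbrs_down_iff_up: "v \<in> second_nbrs_down w \<longleftrightarrow> w \<in> second_nbrs_up v"
  unfolding second_nbrs_down_def second_nbrs_up_def using second_nbrs_sym by auto

lemma finite_second_nbrs_down: "w \<in> V \<Longrightarrow> finite (second_nbrs_down w)"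
  unfolding second_nbrs_down_def using finite_second_nbrs by simp

lemma common_nbrs_second_nbr_up: "u \<in> second_nbrs_up v \<Longrightarrow> {y\<in>V. E v y \<and> E y u} = {z\<in>lower u. E v z}"
  unfolding second_nbrs_up_def lower_def using level_adj E_in_V by fastforce

lemma ncommon_up_eq_nmiddle: "u \<in> second_nbrs_up v \<Longrightarrow> ncommon v u = nmiddle u v"
  unfolding ncommon_def nmiddle_def by (simp add: common_nbrs_second_nbr_up)

lemma sum_ncommon_up:
  assumes v: "v \<in> V"
  shows "(\<Sum>u\<in>second_nbrs_up v. ncommon v u) = (D - level v) * (D - Suc (level v))"
proof -
  have fin: "finite (second_nbrs_up v)"
    using finite_second_nbrs[OF v] unfolding second_nbrs_up_def by simp
  have "(\<Sum>u\<in>second_nbrs_up v. ncommon v u) = (\<Sum>u\<in>second_nbrs_up v. card {y\<in>upper v. E y u})"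
  proof (rule sum.cong)
    fix u assume "u \<in> second_nbrs_up v"
    then have "{y\<in>V. E v y \<and> E y u} = {y\<in>upper v. E y u}"
      unfolding second_nbrs_up_def upper_def using level_adj by fastforce
    then show "ncommon v u = card {y\<in>upper v. E y u}" unfolding ncommon_def by simp
  qed simp
  also have "\<dots> = (\<Sum>y\<in>upper v. card {u\<in>second_nbrs_up v. E y u})"
    by (rule sum_card_filter_swap[OF fin finite_upper[OF v]])
  also have "\<dots> = (\<Sum>y\<in>upper v. D - Suc (level v))"
  proof (rule sum.cong)
    fix y assume y: "y \<in> upper v"
    then have "{u\<in>second_nbrs_up v. E y u} = upper y"
      using upper_level[of y v] level_adj[of y] unfolding second_nbrs_up_def second_nbrs_def upper_def
      by fastforce
    then show "card {u\<in>second_nbrs_up v. E y u} = D - Suc (level v)"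
      using card_upper upper_level[OF y] by simp
  qed simp
  also have "\<dots> = (D - level v) * (D - Suc (level v))" using card_upper[OF v] by simp
  finally show ?thesis .
qed

text \<open>
  The \<open>ncommon v u\<close> add up to \<open>D (D - 1)\<close>, but by SSP there are at most \<open>D (D - 1) / 2\<close>
  of them.
\<close>
lemma card_second_nbrs_up_le:
  assumes v: "v \<in> V" and below: "\<And>u. u \<in> second_nbrs v - second_nbrs_up v \<Longrightarrow> ncommon v u \<le> 2"
  shows "2 * card (second_nbrs_up v) \<le> (D - level v) * (D - Suc (level v))"
proof -
  let ?N = "second_nbrs v" and ?U = "second_nbrs_up v"
  have fin: "finite ?N" and sub: "?U \<subseteq> ?N"
    using finite_second_nbrs[OF v] unfolding second_nbrs_up_def by auto
  have "sum (ncommon v) (?N - ?U) \<le> 2 * card (?N - ?U)"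
    using sum_bounded_above[of "?N - ?U" "ncommon v" 2] below by (simp add: mult.commute)
  moreover have "sum (ncommon v) ?N = sum (ncommon v) (?N - ?U) + sum (ncommon v) ?U"
    using sum.subset_diff[OF sub fin] .
  moreover have "card ?N = card (?N - ?U) + card ?U"
    using card_Diff_subset[OF finite_subset[OF sub fin] sub] card_mono[OF fin sub] by simp
  ultimately show ?thesis
    using card_second_nbrs_le[OF v] sum_ncommon[OF v] sum_ncommon_up[OF v] by linarith
qed

lemma sum_nmiddle:
  assumes w: "w \<in> V"
  shows "(\<Sum>v\<in>second_nbrs_down w. nmiddle w v) = level w * (level w - 1)"
proof -
  have "(\<Sum>v\<in>second_nbrs_down w. nmiddle w v) = (\<Sum>z\<in>lower w. card {v\<in>second_nbrs_down w. E v z})"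
    unfolding nmiddle_def by (rule sum_card_filter_swap[OF finite_second_nbrs_down[OF w] finite_lower[OF w]])
  also have "\<dots> = (\<Sum>z\<in>lower w. level w - 1)"
  proof (rule sum.cong)
    fix z assume z: "z \<in> lower w"
    then have "{v\<in>second_nbrs_down w. E v z} = lower z"
      using lower_level[of z w] level_adj[of _ z] unfolding second_nbrs_down_def second_nbrs_def lower_def
      by (fastforce intro: E_sym)
    then show "card {v\<in>second_nbrs_down w. E v z} = level w - 1"
      using card_lower lower_level[OF z] by fastforce
  qed simp
  also have "\<dots> = level w * (level w - 1)" using card_lower[OF w] by simp
  finally show ?thesis .
qed

lemma sum_nmiddle_pairs:
  assumes w: "w \<in> V"
  shows "(\<Sum>v\<in>second_nbrs_down w. nmiddle w v * (nmiddle w v - 1)) =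
    (\<Sum>p\<in>lower_pairs w. card {v\<in>second_nbrs_down w. E v (fst p) \<and> E v (snd p)})"
proof -
  have "nmiddle w v * (nmiddle w v - 1) = card {p\<in>lower_pairs w. E v (fst p) \<and> E v (snd p)}" for v
  proof -
    have "{p\<in>lower_pairs w. E v (fst p) \<and> E v (snd p)} =
        {p \<in> {z\<in>lower w. E v z} \<times> {z\<in>lower w. E v z}. fst p \<noteq> snd p}"
      unfolding lower_pairs_def by auto
    then show ?thesis
      unfolding nmiddle_def using card_distinct_pairs[of "{z\<in>lower w. E v z}"] finite_lower[OF w] by simp
  qed
  then have "(\<Sum>v\<in>second_nbrs_down w. nmiddle w v * (nmiddle w v - 1)) =
      (\<Sum>v\<in>second_nbrs_down w. card {p\<in>lower_pairs w. E v (fst p) \<and> E v (snd p)})"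
    by simp
  also have "\<dots> = (\<Sum>p\<in>lower_pairs w. card {v\<in>second_nbrs_down w. E v (fst p) \<and> E v (snd p)})"
    using finite_lower[OF w] unfolding lower_pairs_def
    by (intro sum_card_filter_swap finite_second_nbrs_down w) simp
  finally show ?thesis .
qed

lemma card_lower_pairs: "w \<in> V \<Longrightarrow> card (lower_pairs w) = level w * (level w - 1)"
  unfolding lower_pairs_def using card_distinct_pairs[OF finite_lower] card_lower by simp

lemma second_nbrs_down_bound:
  assumes w: "w \<in> V"
    and pairs: "\<And>p. p \<in> lower_pairs w \<Longrightarrow> card {v\<in>second_nbrs_down w. E v (fst p) \<and> E v (snd p)} \<le> 1"
  shows "level w * (level w - 1) \<le> 2 * card (second_nbrs_down w)"
    and "2 * card (second_nbrs_down w) \<le> level w * (level w - 1) \<Longrightarrow>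
      p \<in> lower_pairs w \<Longrightarrow> card {v\<in>second_nbrs_down w. E v (fst p) \<and> E v (snd p)} = 1"
    and "2 * card (second_nbrs_down w) \<le> level w * (level w - 1) \<Longrightarrow>
      v \<in> second_nbrs_down w \<Longrightarrow> nmiddle w v \<le> 2"
proof -
  let ?B = "second_nbrs_down w" and ?n = "nmiddle w" and ?l = "level w * (level w - 1)"
  let ?c = "\<lambda>p. card {v\<in>second_nbrs_down w. E v (fst p) \<and> E v (snd p)}"
  have fin: "finite ?B" by (rule finite_second_nbrs_down[OF w])
  have finP: "finite (lower_pairs w)" using finite_lower[OF w] unfolding lower_pairs_def by simp
  have pairs_le: "(\<Sum>v\<in>?B. ?n v * (?n v - 1)) \<le> ?l"
    unfolding sum_nmiddle_pairs[OF w] card_lower_pairs[OF w, symmetric]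
    using sum_bounded_above[of "lower_pairs w" ?c 1] pairs by simp
  have sum_plus_two: "(\<Sum>v\<in>?B. ?n v * (?n v - 1) + 2) = (\<Sum>v\<in>?B. ?n v * (?n v - 1)) + 2 * card ?B"
    by (simp only: sum.distrib sum_constant) simp
  have double: "(\<Sum>v\<in>?B. 2 * ?n v) \<le> (\<Sum>v\<in>?B. ?n v * (?n v - 1)) + 2 * card ?B"
    unfolding sum_plus_two[symmetric] by (rule sum_mono) (rule double_le_pairs_plus_two)
  have sum_double: "(\<Sum>v\<in>?B. 2 * ?n v) = 2 * ?l"
    using sum_nmiddle[OF w] by (simp add: sum_distrib_left[symmetric])
  then show "?l \<le> 2 * card ?B" using double pairs_le by linarith
  assume tight: "2 * card ?B \<le> ?l"
  show "p \<in> lower_pairs w \<Longrightarrow> ?c p = 1"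
  proof (rule sum_mono_le_inv[OF finP pairs])
    have "?l \<le> (\<Sum>v\<in>?B. ?n v * (?n v - 1))" using tight double sum_double by linarith
    then show "(\<Sum>p\<in>lower_pairs w. 1) \<le> sum ?c (lower_pairs w)"
      unfolding sum_nmiddle_pairs[OF w] card_lower_pairs[OF w, symmetric] by simp
  qed
  show "nmiddle w v \<le> 2" if v: "v \<in> ?B"
  proof (rule ccontr)
    assume "\<not> nmiddle w v \<le> 2"
    then have "2 * ?n v < ?n v * (?n v - 1) + 2" by (intro double_less_pairs_plus_two) simp
    then have "(\<Sum>v\<in>?B. 2 * ?n v) < (\<Sum>v\<in>?B. ?n v * (?n v - 1) + 2)"
      using double_le_pairs_plus_two by (intro sum_strict_mono_ex1 fin) (auto intro: bexI[OF _ v])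
    then show False using tight pairs_le sum_double unfolding sum_plus_two by linarith
  qed
qed

end

section \<open>Labelling by the neighbours of the root\<close>

locale hss_labelling = hss_graph +
  fixes e :: "nat \<Rightarrow> 'a"
  assumes e_bij: "bij_betw e {1..D} (nbrs V E x0)"
begin

definition descent :: "('a \<times> 'a) set"
  where "descent = {(x, y). x \<in> V \<and> y \<in> V \<and> E x y \<and> level y < level x}"

definition label :: "'a \<Rightarrow> nat set" where "label x = {i\<in>{1..D}. (x, e i) \<in> descent\<^sup>*}"

definition layer :: "nat \<Rightarrow> 'a set" where "layer j = {x\<in>V. level x = j}"

definition index_subsets :: "nat \<Rightarrow> nat set set"
  where "index_subsets j = {A. A \<subseteq> {1..D} \<and> card A = j}"

definition labelled_upto :: "nat \<Rightarrow> bool" where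
  "labelled_upto k \<longleftrightarrow> (\<forall>j\<le>k. bij_betw label (layer j) (index_subsets j)) \<and>
     (\<forall>z\<in>V. \<forall>w\<in>V. Suc (level z) = level w \<longrightarrow> level w \<le> k \<longrightarrow> (E z w \<longleftrightarrow> label z \<subseteq> label w))"

lemma layer_iff: "x \<in> layer j \<longleftrightarrow> x \<in> V \<and> level x = j"
  unfolding layer_def by simp

lemma e_nbr: "i \<in> {1..D} \<Longrightarrow> E x0 (e i) \<and> e i \<in> V \<and> level (e i) = 1"
  using bij_betwE[OF e_bij] level_adj[of x0 "e i"] level_x0 unfolding nbrs_def by auto

lemma level_eq_1_iff: "x \<in> V \<Longrightarrow> level x = 1 \<longleftrightarrow> E x0 x"
proof
  assume x: "x \<in> V" and "level x = 1"
  then obtain z where "lower x = {z}" using card_lower card_1_singletonE by metis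
  then show "E x0 x" using lower_level[of z x] level_eq_0 \<open>level x = 1\<close> by auto
qed (use level_adj[of x0 x] level_x0 in auto)

lemma label_subset: "label x \<subseteq> {1..D}"
  unfolding label_def by auto

lemma finite_label: "finite (label x)"
  using label_subset finite_subset by blast

lemma descent_lower: "x \<in> V \<Longrightarrow> (x, z) \<in> descent \<longleftrightarrow> z \<in> lower x"
  unfolding descent_def lower_def using E_sym by auto

lemma label_x0: "label x0 = {}"
proof -
  have "(x0, y) \<notin> descent" for y using level_x0 unfolding descent_def by auto
  then have "(x0, e i) \<notin> descent\<^sup>*" if "i \<in> {1..D}" for i
    using e_nbr[OF that] level_x0 by (auto elim: converse_rtranclE)
  then show ?thesis unfolding label_def by auto
qed

lemma label_e: assumes i: "i \<in> {1..D}" shows "label (e i) = {i}"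
proof -
  have "(e i, e j) \<in> descent\<^sup>* \<longleftrightarrow> i = j" if j: "j \<in> {1..D}" for j
  proof
    assume "(e i, e j) \<in> descent\<^sup>*"
    then have "e i = e j"
    proof (cases rule: converse_rtranclE)
      case (step z)
      then have "z = x0" using e_nbr[OF i] level_eq_0 unfolding descent_def by auto
      then show ?thesis using step label_x0 j unfolding label_def by auto
    qed
    then show "i = j" using bij_betw_imp_inj_on[OF e_bij] i j by (auto dest: inj_onD)
  qed simp
  then show ?thesis using i unfolding label_def by auto
qed

lemma label_eq_Union_lower:
  assumes x: "x \<in> V" "2 \<le> level x" shows "label x = \<Union> (label ` lower x)"
proof -
  have "(x, e i) \<in> descent\<^sup>* \<longleftrightarrow> (\<exists>z\<in>lower x. (z, e i) \<in> descent\<^sup>*)" if i: "i \<in> {1..D}" for i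
  proof
    assume "(x, e i) \<in> descent\<^sup>*"
    then show "\<exists>z\<in>lower x. (z, e i) \<in> descent\<^sup>*"
    proof (cases rule: converse_rtranclE)
      case base
      then show ?thesis using e_nbr[OF i] x by simp
    next
      case (step z)
      then have "z \<in> lower x" using descent_lower[OF x(1)] by simp
      with step show ?thesis by blast
    qed
  next
    assume "\<exists>z\<in>lower x. (z, e i) \<in> descent\<^sup>*"
    then obtain z where "(x, z) \<in> descent" "(z, e i) \<in> descent\<^sup>*"
      using descent_lower[OF x(1)] by blast
    then show "(x, e i) \<in> descent\<^sup>*" by (rule converse_rtrancl_into_rtrancl)
  qed
  then show ?thesis unfolding label_def by blast
qed

lemma label_mono_lower:
  assumes "x \<in> V" "z \<in> lower x" shows "label z \<subseteq> label x"
proof -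
  have "(x, z) \<in> descent" using descent_lower[OF assms(1)] assms(2) by simp
  then show ?thesis unfolding label_def using converse_rtrancl_into_rtrancl by auto
qed

lemma finite_index_subsets: "finite (index_subsets j)"
  unfolding index_subsets_def by simp

lemma card_index_subsets: "card (index_subsets j) = D choose j"
  unfolding index_subsets_def using n_subsets[of "{1..D}" j] by simp

lemma index_subsets_0: "index_subsets 0 = {{}}"
  unfolding index_subsets_def
  by (auto simp: card_eq_0_iff dest: finite_subset[OF _ finite_atLeastAtMost])

lemma labelled_upto_0: "labelled_upto 0"
proof -
  have "layer 0 = {x0}" using level_eq_0 level_x0 x0_in_V unfolding layer_def by blast
  then show ?thesis unfolding labelled_upto_def by (simp add: label_x0 index_subsets_0)
qed

lemma index_subsets_1: "index_subsets 1 = (\<lambda>i. {i}) ` {1..D}"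
  unfolding index_subsets_def by (auto simp: card_1_singleton_iff)

lemma labelled_upto_1: "labelled_upto 1"
proof -
  have layer_1: "layer 1 = e ` {1..D}"
    using bij_betw_imp_surj_on[OF e_bij] level_eq_1_iff unfolding layer_def nbrs_def by auto
  have "bij_betw label (layer 1) (index_subsets 1)"
  proof (rule bij_betw_imageI)
    show "inj_on label (layer 1)"
      unfolding layer_1 inj_on_def using label_e by auto
    have "(\<lambda>i. label (e i)) ` {1..D} = (\<lambda>i. {i}) ` {1..D}"
      by (rule image_cong) (simp_all add: label_e)
    then show "label ` layer 1 = index_subsets 1"
      unfolding layer_1 index_subsets_1 image_image .
  qed
  moreover have "E z w \<longleftrightarrow> label z \<subseteq> label w"
    if "z \<in> V" "w \<in> V" "Suc (level z) = level w" "level w \<le> 1" for z w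
  proof -
    have "z = x0" "level w = 1" using that level_eq_0 by auto
    then show ?thesis using level_eq_1_iff[OF that(2)] label_x0 by simp
  qed
  ultimately show ?thesis
    using labelled_upto_0 unfolding labelled_upto_def by (auto simp: le_Suc_eq)
qed

lemma labelled_upto_bij: "labelled_upto k \<Longrightarrow> j \<le> k \<Longrightarrow> bij_betw label (layer j) (index_subsets j)"
  unfolding labelled_upto_def by blast

lemma labelled_upto_adj_iff_subset:
  "labelled_upto k \<Longrightarrow> z \<in> V \<Longrightarrow> w \<in> V \<Longrightarrow> Suc (level z) = level w \<Longrightarrow> level w \<le> k \<Longrightarrow>
    E z w \<longleftrightarrow> label z \<subseteq> label w"
  unfolding labelled_upto_def by blast

context
  fixes k assumes labelled: "labelled_upto k"
begin

lemma labelled_upto_card: "x \<in> V \<Longrightarrow> level x \<le> k \<Longrightarrow> card (label x) = level x"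
  using bij_betwE[OF labelled_upto_bij[OF labelled]] unfolding layer_def index_subsets_def by blast

lemma labelled_upto_inj:
  assumes "x \<in> V" "y \<in> V" "level x \<le> k" "level y \<le> k" "label x = label y"
  shows "x = y"
proof -
  have "level x = level y" using labelled_upto_card assms by metis
  then show ?thesis
    using bij_betw_imp_inj_on[OF labelled_upto_bij[OF labelled assms(3)]] assms
    unfolding layer_def by (auto dest: inj_onD)
qed

lemma labelled_upto_surj:
  assumes "j \<le> k" "A \<subseteq> {1..D}" "card A = j"
  obtains x where "x \<in> V" "level x = j" "label x = A"
proof -
  have "A \<in> label ` layer j"
    using bij_betw_imp_surj_on[OF labelled_upto_bij[OF labelled assms(1)]] assms
    unfolding index_subsets_def by blast
  then show ?thesis using that unfolding layer_def by auto
qed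

lemma labelled_upto_layer: "j \<le> k \<Longrightarrow> finite (layer j) \<and> card (layer j) = D choose j"
  using bij_betw_finite bij_betw_same_card labelled_upto_bij[OF labelled]
    finite_index_subsets card_index_subsets by metis

lemma labelled_upto_adj_iff_sym_diff:
  assumes x: "x \<in> V" "level x \<le> k" and y: "y \<in> V" "level y \<le> k"
  shows "E x y \<longleftrightarrow> card (sym_diff (label x) (label y)) = 1"
proof -
  have "card (sym_diff (label x) (label y)) = 1 \<longleftrightarrow>
      label x \<subseteq> label y \<and> level y = Suc (level x) \<or> label y \<subseteq> label x \<and> level x = Suc (level y)"
    using card_sym_diff_eq_1_iff[OF finite_label finite_label, of x y]
      labelled_upto_card[OF x] labelled_upto_card[OF y] by simp
  moreover have "E x y \<longleftrightarrow> label x \<subseteq> label y" if "level y = Suc (level x)"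
    using labelled_upto_adj_iff_subset[OF labelled x(1) y(1) that[symmetric] y(2)] .
  moreover have "E x y \<longleftrightarrow> label y \<subseteq> label x" if "level x = Suc (level y)"
    using labelled_upto_adj_iff_subset[OF labelled y(1) x(1) that[symmetric] x(2)] E_sym by blast
  ultimately show ?thesis using level_adj[of x y] by auto
qed

lemma label_common_lower:
  assumes z: "z \<in> V" "level z \<le> k" and z': "z' \<in> V" "level z' \<le> k" and "z \<noteq> z'"
    and v: "v \<in> lower z" "v \<in> lower z'"
  shows "label v = label z \<inter> label z'"
proof -
  note v_z = lower_level[OF v(1)] and v_z' = lower_level[OF v(2)]
  have "label v \<subseteq> label z" "label v \<subseteq> label z'"
    using label_mono_lower z(1) z'(1) v by simp_all
  then have sub: "label v \<subseteq> label z \<inter> label z'" by simp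
  have card_z: "card (label z) = level z" "card (label z') = level z"
    using labelled_upto_card[OF z] labelled_upto_card[OF z'] v_z v_z' by simp_all
  have "label z \<noteq> label z'" using labelled_upto_inj[OF z(1) z'(1) z(2) z'(2)] \<open>z \<noteq> z'\<close> by blast
  then have "\<not> label z \<subseteq> label z'" using card_subset_eq[OF finite_label] card_z by metis
  then have "card (label z \<inter> label z') < card (label z)"
    by (intro psubset_card_mono finite_label) blast
  moreover have "card (label v) = level v" using labelled_upto_card[of v] v_z z(2) by simp
  ultimately have "card (label z \<inter> label z') \<le> card (label v)" using v_z card_z by simp
  moreover have fin: "finite (label z \<inter> label z')" using finite_label by blast
  ultimately show ?thesis using card_subset_eq[OF fin sub] card_mono[OF fin sub] by linarith
qed

lemma card_common_lower_le_1:
  assumes z: "z \<in> V" "level z \<le> k" and z': "z' \<in> V" "level z' \<le> k" and "z \<noteq> z'"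
  shows "card (lower z \<inter> lower z') \<le> 1"
  unfolding One_nat_def
proof (rule card_le_Suc0_iff_eq[THEN iffD2])
  show "finite (lower z \<inter> lower z')" using finite_lower[OF z(1)] by simp
  show "\<forall>v\<in>lower z \<inter> lower z'. \<forall>v'\<in>lower z \<inter> lower z'. v = v'"
  proof (intro ballI)
    fix v v' assume v: "v \<in> lower z \<inter> lower z'" and v': "v' \<in> lower z \<inter> lower z'"
    then have "label v = label v'"
      using label_common_lower[OF z z' \<open>z \<noteq> z'\<close>] by simp
    moreover have "v \<in> V" "v' \<in> V" "level v \<le> k" "level v' \<le> k"
      using v v' z(2) lower_level by fastforce+
    ultimately show "v = v'" using labelled_upto_inj by simp
  qed
qed

text \<open>
  The labels of the common neighbours of \<open>v\<close> and \<open>u\<close> differ from that of \<open>v\<close> by one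
  element of the two-element set \<open>sym_diff (label v) (label u)\<close>.
\<close>
lemma ncommon_below_le_2:
  assumes v: "v \<in> V" "level v < k" and u: "u \<in> V" "level u < k" "u \<noteq> v"
  shows "ncommon v u \<le> 2"
proof -
  let ?Y = "{y\<in>V. E v y \<and> E y u}"
  have vu: "level v \<le> k" "level u \<le> k" "label v \<noteq> label u"
    using v u labelled_upto_inj[OF v(1) u(1)] by auto
  have Y: "y \<in> V" "level y \<le> k" if "y \<in> ?Y" for y
    using that level_adj[of v y] v(2) by auto
  have Y_sym_diff: "card (sym_diff (label v) (label y)) = 1" "card (sym_diff (label y) (label u)) = 1"
    if y: "y \<in> ?Y" for y
  proof -
    from y have "E v y" "E y u" by simp_all
    then show "card (sym_diff (label v) (label y)) = 1" "card (sym_diff (label y) (label u)) = 1"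
      using labelled_upto_adj_iff_sym_diff[OF v(1) vu(1) Y[OF y]]
        labelled_upto_adj_iff_sym_diff[OF Y[OF y] u(1) vu(2)] by simp_all
  qed
  have "inj_on label ?Y"
  proof (rule inj_onI)
    fix y y' assume y: "y \<in> ?Y" and y': "y' \<in> ?Y" and "label y = label y'"
    with Y[OF y] Y[OF y'] show "y = y'" by (intro labelled_upto_inj) simp_all
  qed
  show ?thesis
  proof (cases "?Y = {}")
    case False
    then obtain y where y: "y \<in> ?Y" by blast
    note sym_diff_vu = sym_diff_two_steps(2)[OF Y_sym_diff[OF y] vu(3)]
    then have fin: "finite (sym_diff (label v) (label u))" by (intro card_ge_0_finite) simp
    have "ncommon v u = card (label ` ?Y)"
      unfolding ncommon_def using \<open>inj_on label ?Y\<close> by (simp add: card_image)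
    also have "\<dots> \<le> card ((\<lambda>a. sym_diff (label v) {a}) ` sym_diff (label v) (label u))"
      using sym_diff_two_steps(1)[OF Y_sym_diff vu(3)]
      by (intro card_mono finite_imageI fin) blast
    also have "\<dots> \<le> 2"
      using card_image_le[OF fin] sym_diff_vu by simp
    finally show ?thesis .
  qed (simp add: ncommon_def del: Collect_empty_eq)
qed

end

section \<open>The induction step\<close>

context
  fixes k :: nat
  assumes labelled: "labelled_upto k" and k_pos: "1 \<le> k" and k_less_D: "k < D"
begin

lemma finite_layer_Suc: "finite (layer (Suc k))"
proof -
  have "layer (Suc k) \<subseteq> (\<Union>z\<in>layer k. upper z)"
  proof
    fix w assume w: "w \<in> layer (Suc k)"
    then obtain z where z: "z \<in> lower w"
      using card_lower[of w] layer_iff by (metis card.empty all_not_in_conv nat.distinct(1))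
    then have "z \<in> layer k" "w \<in> upper z"
      using lower_level[OF z] w unfolding layer_iff upper_def by auto
    then show "w \<in> (\<Union>z\<in>layer k. upper z)" by blast
  qed
  moreover have "finite (\<Union>z\<in>layer k. upper z)"
    using labelled_upto_layer[OF labelled, of k] finite_upper layer_iff by simp
  ultimately show ?thesis by (rule finite_subset)
qed

lemma card_layer_Suc: "card (layer (Suc k)) = D choose Suc k"
proof -
  have up: "{w\<in>layer (Suc k). E z w} = upper z" if "z \<in> layer k" for z
    using that unfolding layer_def upper_def by (auto dest: level_adj)
  have down: "{z\<in>layer k. E z w} = lower w" if "w \<in> layer (Suc k)" for w
    using that unfolding layer_def lower_def by (auto dest: level_adj)
  have "(\<Sum>z\<in>layer k. card {w\<in>layer (Suc k). E z w}) = (\<Sum>w\<in>layer (Suc k). card {z\<in>layer k. E z w})"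
    using labelled_upto_layer[OF labelled, of k] finite_layer_Suc by (intro sum_card_filter_swap) simp_all
  moreover have "(\<Sum>z\<in>layer k. card {w\<in>layer (Suc k). E z w}) = card (layer k) * (D - k)"
    using up card_upper layer_iff by simp
  moreover have "(\<Sum>w\<in>layer (Suc k). card {z\<in>layer k. E z w}) = card (layer (Suc k)) * Suc k"
    using down card_lower layer_iff by simp
  ultimately have "(D choose k) * (D - k) = card (layer (Suc k)) * Suc k"
    using labelled_upto_layer[OF labelled, of k] by simp
  then have "(D choose Suc k) * Suc k = card (layer (Suc k)) * Suc k"
    using binomial_times_diff[of D k] by simp
  then show ?thesis by (simp only: mult_cancel2) simp
qed

lemma ncommon_not_up_le_2:
  assumes v: "v \<in> layer (k - 1)" and u: "u \<in> second_nbrs v" "u \<notin> second_nbrs_up v"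
  shows "ncommon v u \<le> 2"
proof (rule ncommon_below_le_2[OF labelled])
  have v': "v \<in> V" "level v = k - 1" using v layer_iff by auto
  then show "v \<in> V" "level v < k" using k_pos by auto
  show "u \<in> V" "u \<noteq> v" using u unfolding second_nbrs_def by auto
  have "level u \<noteq> level v + 2" using u unfolding second_nbrs_up_def by auto
  then show "level u < k" using level_second_nbr[OF u(1)] v'(2) k_pos by linarith
qed

lemma card_second_nbrs_up_layer:
  assumes v: "v \<in> layer (k - 1)"
  shows "2 * card (second_nbrs_up v) \<le> Suc (D - k) * (D - k)"
proof -
  have v': "v \<in> V" "level v = k - 1" using v layer_iff by auto
  have "D - level v = Suc (D - k)" "D - Suc (level v) = D - k"
    using v'(2) k_pos k_less_D by simp_all
  then show ?thesis
    using card_second_nbrs_up_le[OF v'(1)] ncommon_not_up_le_2[OF v] by simp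
qed

lemma lower_pairs_common_le_1:
  assumes w: "w \<in> layer (Suc k)" and p: "p \<in> lower_pairs w"
  shows "card {v\<in>second_nbrs_down w. E v (fst p) \<and> E v (snd p)} \<le> 1"
proof -
  have z: "fst p \<in> V" "level (fst p) = k" "snd p \<in> V" "level (snd p) = k" "fst p \<noteq> snd p"
    using p w unfolding lower_pairs_def layer_iff by (auto dest: lower_level)
  have sub: "{v\<in>second_nbrs_down w. E v (fst p) \<and> E v (snd p)} \<subseteq> lower (fst p) \<inter> lower (snd p)"
  proof
    fix v assume "v \<in> {v\<in>second_nbrs_down w. E v (fst p) \<and> E v (snd p)}"
    then have "v \<in> V" "level w = level v + 2" "E v (fst p)" "E v (snd p)"
      unfolding second_nbrs_down_def second_nbrs_def by auto
    then show "v \<in> lower (fst p) \<inter> lower (snd p)" using w z(2,4) unfolding layer_iff lower_def by simp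
  qed
  have "card {v\<in>second_nbrs_down w. E v (fst p) \<and> E v (snd p)} \<le> card (lower (fst p) \<inter> lower (snd p))"
    by (rule card_mono[OF _ sub]) (use finite_lower[OF z(1)] in simp)
  also have "\<dots> \<le> 1"
    by (rule card_common_lower_le_1[OF labelled z(1) _ z(3) _ z(5)]) (use z(2,4) in simp_all)
  finally show ?thesis .
qed

text \<open>
  Double counting the pairs \<open>(v, w)\<close> at distance two with \<open>v\<close> in layer \<open>k - 1\<close> and \<open>w\<close> in
  layer \<open>k + 1\<close> shows that the lower bound of \<open>second_nbrs_down_bound\<close> is attained.
\<close>
lemma card_second_nbrs_down_layer:
  assumes w: "w \<in> layer (Suc k)"
  shows "2 * card (second_nbrs_down w) = Suc k * k"
proof -
  let ?A = "layer (k - 1)" and ?B = "layer (Suc k)"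
  have ge: "Suc k * k \<le> 2 * card (second_nbrs_down w)" if "w \<in> ?B" for w
    using second_nbrs_down_bound(1)[OF _ lower_pairs_common_le_1[OF that]] that layer_iff by auto
  have down_sub: "second_nbrs_down w \<subseteq> ?A" if "w \<in> ?B" for w
    using that k_pos unfolding second_nbrs_down_def second_nbrs_def by (auto simp: layer_iff)
  have up_sub: "second_nbrs_up v \<subseteq> ?B" if "v \<in> ?A" for v
    using that k_pos unfolding second_nbrs_up_def second_nbrs_def by (auto simp: layer_iff)
  have finA: "finite ?A" using labelled_upto_layer[OF labelled, of "k - 1"] by simp
  have "(\<Sum>w\<in>?B. card {v\<in>?A. v \<in> second_nbrs_down w}) = (\<Sum>v\<in>?A. card {w\<in>?B. v \<in> second_nbrs_down w})"
    by (rule sum_card_filter_swap[OF finite_layer_Suc finA])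
  moreover have "{v\<in>?A. v \<in> second_nbrs_down w} = second_nbrs_down w" if "w \<in> ?B" for w
    using down_sub[OF that] by blast
  moreover have "{w\<in>?B. v \<in> second_nbrs_down w} = second_nbrs_up v" if "v \<in> ?A" for v
    using up_sub[OF that] second_nbrs_down_iff_up by blast
  ultimately have swap: "(\<Sum>w\<in>?B. card (second_nbrs_down w)) = (\<Sum>v\<in>?A. card (second_nbrs_up v))"
    by simp
  have "(\<Sum>w\<in>?B. 2 * card (second_nbrs_down w)) = (\<Sum>v\<in>?A. 2 * card (second_nbrs_up v))"
    using swap by (simp add: sum_distrib_left[symmetric])
  also have "\<dots> \<le> (\<Sum>v\<in>?A. Suc (D - k) * (D - k))"
    by (rule sum_mono) (rule card_second_nbrs_up_layer)
  also have "\<dots> = (D choose (k - 1)) * Suc (D - k) * (D - k)"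
    using labelled_upto_layer[OF labelled, of "k - 1"] by (simp only: sum_constant mult.assoc) simp
  also have "\<dots> = (D choose Suc k) * (Suc k * k)"
  proof -
    have "D - (k - 1) = Suc (D - k)" "Suc (k - 1) = k" using k_pos k_less_D by auto
    then have "(D choose (k - 1)) * Suc (D - k) = (D choose k) * k"
      using binomial_times_diff[of D "k - 1"] by simp
    then show ?thesis using binomial_times_diff[of D k] by (metis mult.assoc mult.commute)
  qed
  also have "\<dots> = (\<Sum>w\<in>?B. Suc k * k)" using card_layer_Suc by simp
  finally have "sum (\<lambda>w. 2 * card (second_nbrs_down w)) ?B \<le> sum (\<lambda>_. Suc k * k) ?B" .
  from sum_mono_le_inv[OF finite_layer_Suc ge this w] show ?thesis by simp
qed

lemma lower_layer_Suc: "w \<in> layer (Suc k) \<Longrightarrow> z \<in> lower w \<Longrightarrow> z \<in> V \<and> level z = k"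
  using lower_level layer_iff by fastforce

lemma two_lower_nbrs:
  assumes w: "w \<in> layer (Suc k)"
  obtains z\<^sub>1 z\<^sub>2 where "z\<^sub>1 \<in> lower w" "z\<^sub>2 \<in> lower w" "z\<^sub>1 \<noteq> z\<^sub>2"
proof -
  have "card (lower w) = Suc k" using card_lower w layer_iff by simp
  then have "\<not> card (lower w) \<le> Suc 0" using k_pos by simp
  then show ?thesis
    using that card_le_Suc0_iff_eq[OF finite_lower] w layer_iff by blast
qed

lemma lower_pair_common_lower:
  assumes w: "w \<in> layer (Suc k)" and z: "z \<in> lower w" "z' \<in> lower w" "z \<noteq> z'"
  obtains v where "v \<in> lower z" "v \<in> lower z'"
proof -
  have w': "w \<in> V" "level w = Suc k" using w layer_iff by auto
  have "(z, z') \<in> lower_pairs w" unfolding lower_pairs_def using z by simp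
  from second_nbrs_down_bound(2)[OF w'(1) lower_pairs_common_le_1[OF w] _ this]
  have "card {v\<in>second_nbrs_down w. E v z \<and> E v z'} = 1"
    using card_second_nbrs_down_layer[OF w] w'(2) by simp
  then obtain v where v: "v \<in> second_nbrs_down w" "E v z" "E v z'"
    by (metis (no_types, lifting) card_1_singletonE insertI1 mem_Collect_eq)
  have "level w = level v + 2" using v(1) unfolding second_nbrs_down_def by simp
  then have "v \<in> lower z" "v \<in> lower z'"
    using v E_in_V lower_level[OF z(1)] lower_level[OF z(2)] unfolding lower_def by auto
  then show ?thesis by (rule that)
qed

lemma card_label_inter_lower:
  assumes w: "w \<in> layer (Suc k)" and z: "z \<in> lower w" "z' \<in> lower w" "z \<noteq> z'"
  shows "card (label z \<inter> label z') = k - 1"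
proof -
  obtain v where v: "v \<in> lower z" "v \<in> lower z'" by (rule lower_pair_common_lower[OF w z])
  have "z \<in> V" "level z = k" "z' \<in> V" "level z' = k"
    using lower_layer_Suc[OF w] z by auto
  then have "label z \<inter> label z' = label v" "v \<in> V" "level v = k - 1"
    using label_common_lower[OF labelled _ _ _ _ z(3) v] lower_level[OF v(1)] by auto
  then show ?thesis using labelled_upto_card[OF labelled] k_pos by simp
qed

lemma nmiddle_le_2: "w \<in> layer (Suc k) \<Longrightarrow> v \<in> second_nbrs_down w \<Longrightarrow> nmiddle w v \<le> 2"
  using second_nbrs_down_bound(3)[OF _ lower_pairs_common_le_1] card_second_nbrs_down_layer layer_iff
  by auto

lemma common_lower_not_adj_third:
  assumes w: "w \<in> layer (Suc k)" and z: "z \<in> lower w" "z\<^sub>1 \<in> lower w" "z\<^sub>2 \<in> lower w"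
    and ne: "z \<noteq> z\<^sub>1" "z \<noteq> z\<^sub>2" "z\<^sub>1 \<noteq> z\<^sub>2" and v: "v \<in> lower z\<^sub>1" "v \<in> lower z\<^sub>2"
  shows "\<not> E v z"
proof
  assume "E v z"
  have "v \<in> V" "Suc (level v) = level z\<^sub>1" "E v z\<^sub>1" "E v z\<^sub>2"
    using lower_level[OF v(1)] lower_level[OF v(2)] by auto
  moreover have "Suc (level z\<^sub>1) = level w" "E z\<^sub>1 w" using lower_level[OF z(2)] by auto
  ultimately have "v \<in> second_nbrs_down w"
    unfolding second_nbrs_down_def second_nbrs_def using E_sym by auto
  have "{z, z\<^sub>1, z\<^sub>2} \<subseteq> {y\<in>lower w. E v y}"
    using z \<open>E v z\<close> \<open>E v z\<^sub>1\<close> \<open>E v z\<^sub>2\<close> by auto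
  then have "card {z, z\<^sub>1, z\<^sub>2} \<le> nmiddle w v"
    unfolding nmiddle_def using finite_lower w layer_iff by (intro card_mono) auto
  then have "3 \<le> nmiddle w v" using ne by simp
  then show False using nmiddle_le_2[OF w \<open>v \<in> second_nbrs_down w\<close>] by simp
qed

lemma label_lower_inter_subset:
  assumes w: "w \<in> layer (Suc k)" and z: "z \<in> lower w" "z\<^sub>1 \<in> lower w" "z\<^sub>2 \<in> lower w"
    and ne: "z \<noteq> z\<^sub>1" "z \<noteq> z\<^sub>2" "z\<^sub>1 \<noteq> z\<^sub>2" and a: "a \<in> label z" "a \<notin> label z\<^sub>1 \<union> label z\<^sub>2"
  shows "label z\<^sub>1 \<inter> label z\<^sub>2 \<subseteq> label z"
proof -
  let ?Y = "label z \<inter> (label z\<^sub>1 \<union> label z\<^sub>2)"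
  have "card (label z) = k" using labelled_upto_card[OF labelled] lower_layer_Suc[OF w z(1)] by simp
  moreover have "card ?Y \<le> card (label z - {a})" using a finite_label by (intro card_mono) auto
  ultimately have card_Y: "card ?Y \<le> k - 1" using a finite_label by simp
  have Y_eq: "label z \<inter> label z\<^sub>i = ?Y" if "z\<^sub>i \<in> {z\<^sub>1, z\<^sub>2}" for z\<^sub>i
  proof (rule card_subset_eq)
    show "finite ?Y" using finite_label by blast
    show "label z \<inter> label z\<^sub>i \<subseteq> ?Y" using that by blast
    then show "card (label z \<inter> label z\<^sub>i) = card ?Y"
      using card_mono[of ?Y "label z \<inter> label z\<^sub>i"] card_Y finite_label
        card_label_inter_lower[OF w z(1)] z ne that by fastforce
  qed
  have "card (label z\<^sub>1 \<inter> label z\<^sub>2 \<inter> label z) = card (label z\<^sub>1 \<inter> label z\<^sub>2)"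
  proof -
    have "label z\<^sub>1 \<inter> label z\<^sub>2 \<inter> label z = ?Y" using Y_eq[of z\<^sub>1] Y_eq[of z\<^sub>2] by blast
    then show ?thesis
      using Y_eq[of z\<^sub>1] card_label_inter_lower[OF w z(1,2) ne(1)] card_label_inter_lower[OF w z(2,3) ne(3)]
      by simp
  qed
  then have "label z\<^sub>1 \<inter> label z\<^sub>2 \<inter> label z = label z\<^sub>1 \<inter> label z\<^sub>2"
    using finite_label by (intro card_subset_eq) auto
  then show ?thesis by blast
qed

text \<open>
  Otherwise the common lower neighbour of \<open>z\<^sub>1\<close> and \<open>z\<^sub>2\<close> would be adjacent to three lower
  neighbours of \<open>w\<close>.
\<close>
lemma label_lower_subset_Un:
  assumes w: "w \<in> layer (Suc k)" and z12: "z\<^sub>1 \<in> lower w" "z\<^sub>2 \<in> lower w" "z\<^sub>1 \<noteq> z\<^sub>2"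
    and z: "z \<in> lower w"
  shows "label z \<subseteq> label z\<^sub>1 \<union> label z\<^sub>2"
proof (rule ccontr)
  assume "\<not> label z \<subseteq> label z\<^sub>1 \<union> label z\<^sub>2"
  then obtain a where a: "a \<in> label z" "a \<notin> label z\<^sub>1 \<union> label z\<^sub>2" by blast
  then have ne: "z \<noteq> z\<^sub>1" "z \<noteq> z\<^sub>2" by auto
  obtain v where v: "v \<in> lower z\<^sub>1" "v \<in> lower z\<^sub>2" by (rule lower_pair_common_lower[OF w z12])
  have z': "z \<in> V" "level z = k" and z\<^sub>1': "z\<^sub>1 \<in> V" "level z\<^sub>1 = k" and z\<^sub>2': "z\<^sub>2 \<in> V" "level z\<^sub>2 = k"
    using lower_layer_Suc[OF w] z z12 by auto
  have "label v = label z\<^sub>1 \<inter> label z\<^sub>2"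
    using label_common_lower[OF labelled z\<^sub>1'(1) _ z\<^sub>2'(1) _ z12(3) v] z\<^sub>1'(2) z\<^sub>2'(2) by simp
  then have "label v \<subseteq> label z" using label_lower_inter_subset[OF w z z12(1,2) ne z12(3) a] by simp
  moreover have "v \<in> V" "Suc (level v) = level z" using lower_level[OF v(1)] z\<^sub>1'(2) z'(2) by auto
  ultimately have "E v z" using labelled_upto_adj_iff_subset[OF labelled _ z'(1)] z'(2) by simp
  then show False using common_lower_not_adj_third[OF w z z12(1,2) ne z12(3) v] by simp
qed

lemma label_layer_Suc:
  assumes w: "w \<in> layer (Suc k)"
  shows "card (label w) = Suc k" and "label ` lower w = {A. A \<subseteq> label w \<and> card A = k}"
proof -
  obtain z\<^sub>1 z\<^sub>2 where z12: "z\<^sub>1 \<in> lower w" "z\<^sub>2 \<in> lower w" "z\<^sub>1 \<noteq> z\<^sub>2" by (rule two_lower_nbrs[OF w])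
  have card_label_z: "card (label z) = k" if "z \<in> lower w" for z
    using labelled_upto_card[OF labelled] lower_layer_Suc[OF w that] by simp
  have "label w = \<Union> (label ` lower w)" using label_eq_Union_lower w k_pos layer_iff by simp
  also have "\<dots> = label z\<^sub>1 \<union> label z\<^sub>2" using label_lower_subset_Un[OF w z12] z12 by blast
  finally have label_w: "label w = label z\<^sub>1 \<union> label z\<^sub>2" .
  have "card (label z\<^sub>1) + card (label z\<^sub>2) = card (label w) + card (label z\<^sub>1 \<inter> label z\<^sub>2)"
    unfolding label_w by (rule card_Un_Int[OF finite_label finite_label])
  then show card_w: "card (label w) = Suc k"
    using card_label_z[OF z12(1)] card_label_z[OF z12(2)] card_label_inter_lower[OF w z12] k_pos by simp
  have "inj_on label (lower w)"
    by (rule inj_onI, rule labelled_upto_inj[OF labelled]) (simp_all add: lower_layer_Suc[OF w])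
  then have "card (label ` lower w) = Suc k"
    using card_image card_lower w layer_iff by metis
  moreover have "card {A. A \<subseteq> label w \<and> card A = k} = Suc k"
    using n_subsets[OF finite_label[of w], of k] card_w by simp
  moreover have "label ` lower w \<subseteq> {A. A \<subseteq> label w \<and> card A = k}"
    using label_mono_lower card_label_z w layer_iff by auto
  moreover have "finite {A. A \<subseteq> label w \<and> card A = k}" using finite_label by simp
  ultimately show "label ` lower w = {A. A \<subseteq> label w \<and> card A = k}"
    using card_subset_eq by metis
qed

lemma adj_layer_Suc_iff:
  assumes z: "z \<in> layer k" and w: "w \<in> layer (Suc k)"
  shows "E z w \<longleftrightarrow> label z \<subseteq> label w"
proof
  assume "E z w"
  then have "z \<in> lower w" using z w unfolding lower_def layer_iff by simp
  then show "label z \<subseteq> label w" using label_mono_lower w layer_iff by simp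
next
  assume "label z \<subseteq> label w"
  moreover have "card (label z) = k" using labelled_upto_card[OF labelled] z layer_iff by simp
  ultimately have "label z \<in> label ` lower w" using label_layer_Suc(2)[OF w] by simp
  then obtain z' where z': "z' \<in> lower w" "label z = label z'" by auto
  have "z' \<in> V" "level z' = k" using lower_level[OF z'(1)] w layer_iff by auto
  then have "z = z'" using labelled_upto_inj[OF labelled] z z'(2) layer_iff by simp
  then show "E z w" using lower_level[OF z'(1)] by simp
qed

lemma ncommon_le_2:
  assumes v: "v \<in> layer (k - 1)" and u: "u \<in> second_nbrs v"
  shows "ncommon v u \<le> 2"
proof (cases "u \<in> second_nbrs_up v")
  case True
  then have "u \<in> layer (Suc k)" "v \<in> second_nbrs_down u"
    using v k_pos second_nbrs_down_iff_up unfolding second_nbrs_up_def second_nbrs_def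
    by (auto simp: layer_iff)
  then show ?thesis using ncommon_up_eq_nmiddle[OF True] nmiddle_le_2 by simp
next
  case False
  with u v show ?thesis by (intro ncommon_not_up_le_2) simp_all
qed

text \<open>
  Two vertices of layer \<open>k + 1\<close> with the same label have the same lower neighbours, so
  they both are second neighbours of a common lower neighbour of two of these, contradicting NCP.
\<close>
lemma inj_on_label_layer_Suc: "inj_on label (layer (Suc k))"
proof (rule inj_onI, rule ccontr)
  fix w w' assume w: "w \<in> layer (Suc k)" and w': "w' \<in> layer (Suc k)"
    and same: "label w = label w'" and "w \<noteq> w'"
  have "z \<in> lower w \<longleftrightarrow> z \<in> lower w'" for z
  proof -
    have "z \<in> lower x \<longleftrightarrow> z \<in> layer k \<and> label z \<subseteq> label x" if x: "x \<in> layer (Suc k)" for x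
    proof -
      have "z \<in> lower x \<longleftrightarrow> z \<in> layer k \<and> E z x"
        using x lower_level[of z x] unfolding lower_def layer_iff by auto
      then show ?thesis using adj_layer_Suc_iff[OF _ x] by blast
    qed
    then show ?thesis using w w' same by simp
  qed
  then have lower_eq: "lower w' = lower w" by blast
  obtain z\<^sub>1 z\<^sub>2 where z12: "z\<^sub>1 \<in> lower w" "z\<^sub>2 \<in> lower w" "z\<^sub>1 \<noteq> z\<^sub>2" by (rule two_lower_nbrs[OF w])
  obtain v where v: "v \<in> lower z\<^sub>1" "v \<in> lower z\<^sub>2" by (rule lower_pair_common_lower[OF w z12])
  have "v \<in> layer (k - 1)" "E v z\<^sub>1" "E v z\<^sub>2"
    using lower_level[OF v(1)] lower_level[OF v(2)] lower_layer_Suc[OF w z12(1)] layer_iff by auto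
  have "u \<in> {u\<in>second_nbrs v. E z\<^sub>1 u \<and> E u z\<^sub>2}" if "u \<in> layer (Suc k)" "z\<^sub>1 \<in> lower u" "z\<^sub>2 \<in> lower u" for u
  proof -
    have "u \<in> V" "u \<noteq> v" "E z\<^sub>1 u" "E z\<^sub>2 u"
      using that lower_level[OF that(2)] lower_level[OF that(3)] \<open>v \<in> layer (k - 1)\<close> k_pos
      unfolding layer_iff by auto
    then show ?thesis unfolding second_nbrs_def using \<open>E v z\<^sub>1\<close> E_sym by blast
  qed
  then have "{w, w'} \<subseteq> {u\<in>second_nbrs v. E z\<^sub>1 u \<and> E u z\<^sub>2}" using w w' z12 lower_eq by auto
  then have "card {w, w'} \<le> card {u\<in>second_nbrs v. E z\<^sub>1 u \<and> E u z\<^sub>2}"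
    using finite_second_nbrs \<open>v \<in> layer (k - 1)\<close> layer_iff by (intro card_mono) auto
  also have "\<dots> \<le> 1"
    using card_common_second_nbrs_le_1[OF _ ballI[OF ncommon_le_2] \<open>E v z\<^sub>1\<close> \<open>E v z\<^sub>2\<close> z12(3)]
      \<open>v \<in> layer (k - 1)\<close> layer_iff by simp
  finally show False using \<open>w \<noteq> w'\<close> by simp
qed

lemma labelled_upto_Suc: "labelled_upto (Suc k)"
proof -
  have "label ` layer (Suc k) \<subseteq> index_subsets (Suc k)"
    using label_subset label_layer_Suc(1) unfolding index_subsets_def by auto
  moreover have "card (label ` layer (Suc k)) = card (index_subsets (Suc k))"
    using card_image[OF inj_on_label_layer_Suc] card_layer_Suc card_index_subsets by simp
  ultimately have "bij_betw label (layer (Suc k)) (index_subsets (Suc k))"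
    using card_subset_eq[OF finite_index_subsets] inj_on_label_layer_Suc by (simp add: bij_betw_def)
  moreover have "E z w \<longleftrightarrow> label z \<subseteq> label w"
    if "z \<in> V" "w \<in> V" "Suc (level z) = level w" "level w = Suc k" for z w
    using adj_layer_Suc_iff that layer_iff by simp
  ultimately show ?thesis
    using labelled unfolding labelled_upto_def by (auto simp: le_Suc_eq)
qed

end

section \<open>The isomorphism\<close>

lemma labelled_upto_D: "labelled_upto D"
proof -
  have "labelled_upto k" if "k \<le> D" for k
    using that
  proof (induction k)
    case (Suc k)
    show ?case
    proof (cases "k = 0")
      case False
      with Suc show ?thesis by (intro labelled_upto_Suc) simp_all
    qed (use labelled_upto_1 in simp)
  qed (rule labelled_upto_0)
  then show ?thesis by simp
qed

theorem graph_iso_hypercube: "graph_iso V E (hcube_V D) hcube_E"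
proof -
  note labelled = labelled_upto_D
  have "bij_betw label V (Pow {1..D})"
  proof (rule bij_betw_imageI)
    show "inj_on label V"
      by (rule inj_onI, rule labelled_upto_inj[OF labelled]) (simp_all add: level_le_D)
    have "A \<in> label ` V" if A: "A \<subseteq> {1..D}" for A
    proof -
      have "card A \<le> D" using card_mono[OF _ A] by simp
      then obtain x where "x \<in> V" "level x = card A" "label x = A"
        by (rule labelled_upto_surj[OF labelled _ A refl])
      then show ?thesis by blast
    qed
    then show "label ` V = Pow {1..D}" using label_subset by blast
  qed
  moreover have "E x y \<longleftrightarrow> hcube_E (label x) (label y)" if "x \<in> V" "y \<in> V" for x y
    using labelled_upto_adj_iff_sym_diff[OF labelled] that level_le_D unfolding hcube_E_def by simp
  ultimately show ?thesis unfolding graph_iso_def hcube_V_def by blast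
qed

end

theorem corollary6:
  fixes V :: "'a set" and E :: "'a \<Rightarrow> 'a \<Rightarrow> bool" and D :: nat
  assumes "simple_graph V E"
    and "HSS V E D"
    and "\<forall>x \<in> V. SSP V E D x"
    and "\<forall>x \<in> V. NCP V E x"
  shows "graph_iso V E (hcube_V D) hcube_E"
proof -
  from assms(2) obtain x0 where x0: "x0 \<in> V" and "regular V E D" "bipartite V E"
    and "\<forall>x\<in>V. enat (d_minus V E x0 x) = gdist V E x x0"
    unfolding HSS_def by blast
  moreover from this have "finite (nbrs V E x0)" "card (nbrs V E x0) = D"
    unfolding regular_def by auto
  then obtain e where "bij_betw e {1..D} (nbrs V E x0)"
    using ex_bij_betw_nat_finite_1 by metis
  ultimately interpret hss_labelling V E D x0 e
    using assms by unfold_locales simp_all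
  show ?thesis by (rule graph_iso_hypercube)
qed

end
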